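(* Let $n\ge 1$ and let $U$ be a matchgate unitary on $n$ qubits with associated orthogonal matrix $\mathbf{u}\in \mathbf{SO}(2n)$, i.e. $U^\dagger c_\mu U=\sum_{\nu=1}^{2n}u_{\mu\nu}c_\nu$ for all $\mu\in\{1,\dots,2n\}$. Let $\vec\eta$ and $\vec\alpha$ be Majorana configurations and let $a,b$ be integers such that $A\equiv i^aC_{\vec\eta}$ and $B\equiv i^bC_{\vec\alpha}$ are Hermitian (Pauli observables). Then $$\frac{1}{2^{n+2}}\big\|[A,U^\dagger BU]\big\|^2=\frac12\Big\{1+(-1)^{|\vec\alpha||\vec\eta|+1}\det\big[\mathbf{u}_{\vec\alpha[2n]}(\mathbf{I}-2\mathbf{P}_{\vec\eta})\mathbf{u}^{\mathrm T}_{[2n]\vec\alpha}\big]\Big\},$$ where $\|\cdot\|$ is the Frobenius norm, $\mathbf I$ is the $2n\times 2n$ identity, and $\mathbf{P}_{\vec\eta}$ is the $2n\times 2n$ diagonal matrix with $(\mathbf{P}_{\vec\eta})_{jk}=\delta_{jk}$ if $j,k\in\vec\eta$ and $0$ otherwise (the projector onto the modes $\vec\eta$).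
   Context: On $n$ qubits with Pauli operators $X_k,Y_k,Z_k$, the Majorana operators are $c_{2k-1}=Z_1\cdots Z_{k-1}X_k$ and $c_{2k}=Z_1\cdots Z_{k-1}Y_k$ for $k=1,\dots,n$; they satisfy $c_\mu^2=I$, $c_\mu c_\nu=-c_\nu c_\mu$ for $\mu\ne\nu$. A Majorana configuration is an ordered tuple $\vec\alpha=(\alpha_1,\dots,\alpha_k)$ with $1\le\alpha_1<\alpha_2<\dots<\alpha_k\le 2n$, of degree $|\vec\alpha|=k$; the configuration operator is $C_{\vec\alpha}=c_{\alpha_1}c_{\alpha_2}\cdots c_{\alpha_k}$. $[2n]=(1,2,\dots,2n)$. For a matrix $\mathbf u$ and tuples $\vec\alpha,\vec\beta$, $\mathbf{u}_{\vec\alpha\vec\beta}$ is the submatrix with $(\mathbf{u}_{\vec\alpha\vec\beta})_{jk}=u_{\alpha_j\beta_k}$, and $\mathbf{u}^{\mathrm T}_{\vec\beta\vec\alpha}$ denotes $(\mathbf{u}_{\vec\alpha\vec\beta})^{\mathrm T}$. A matchgate unitary is a unitary $U$ on $n$ qubits (equivalently, a circuit of nearest-neighbour matchgates, i.e. generated by Hamiltonians quadratic in the Majorana operators) for which there is $\mathbf u\in\mathbf{SO}(2n)$ with $U^\dagger c_\mu U=\sum_\nu u_{\mu\nu}c_\nu$. The Frobenius norm is $\|O\|^2=\mathrm{tr}(O^\dagger O)$. *)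

theory Defs
  imports Complex_Main "Jordan_Normal_Form.Determinant"
begin

text \<open>Operators on n qubits are complex (2^n x 2^n) matrices. The computational basis
index r < 2^n encodes qubit k (k = 1..n) in bit (k-1) of r.\<close>

definition qbit :: "nat \<Rightarrow> nat \<Rightarrow> nat" where
  "qbit q r = (r div 2 ^ q) mod 2"

definition pI :: "nat \<Rightarrow> nat \<Rightarrow> complex" where
  "pI r s = (if r = s then 1 else 0)"
definition pX :: "nat \<Rightarrow> nat \<Rightarrow> complex" where
  "pX r s = (if r \<noteq> s then 1 else 0)"
definition pY :: "nat \<Rightarrow> nat \<Rightarrow> complex" where
  "pY r s = (if r = 0 \<and> s = 1 then - \<i> else if r = 1 \<and> s = 0 then \<i> else 0)"
definition pZ :: "nat \<Rightarrow> nat \<Rightarrow> complex" where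
  "pZ r s = (if r = s then (if r = 0 then 1 else -1) else 0)"

text \<open>Tensor product P_1 \<otimes> ... \<otimes> P_n, where P q is the factor on qubit q+1.\<close>
definition pauli_string :: "nat \<Rightarrow> (nat \<Rightarrow> nat \<Rightarrow> nat \<Rightarrow> complex) \<Rightarrow> complex mat" where
  "pauli_string n P = mat (2 ^ n) (2 ^ n) (\<lambda>(r, s). \<Prod>q<n. P q (qbit q r) (qbit q s))"

text \<open>Majorana operators, mu = 1..2n:
  c_(2k-1) = Z_1...Z_(k-1) X_k,  c_(2k) = Z_1...Z_(k-1) Y_k.\<close>
definition majorana :: "nat \<Rightarrow> nat \<Rightarrow> complex mat" where
  "majorana n \<mu> = (let k = (\<mu> + 1) div 2 in
     pauli_string n (\<lambda>q. if q + 1 < k then pZ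
                        else if q + 1 = k then (if odd \<mu> then pX else pY)
                        else pI))"

definition majorana_config :: "nat \<Rightarrow> nat list \<Rightarrow> bool" where
  "majorana_config n \<alpha> \<longleftrightarrow> sorted_wrt (<) \<alpha> \<and> (\<forall>a\<in>set \<alpha>. 1 \<le> a \<and> a \<le> 2 * n)"

definition config_op :: "nat \<Rightarrow> nat list \<Rightarrow> complex mat" where
  "config_op n \<alpha> = foldr (\<lambda>\<mu> M. majorana n \<mu> * M) \<alpha> (1\<^sub>m (2 ^ n))"

definition dagger :: "complex mat \<Rightarrow> complex mat" where
  "dagger A = mat (dim_col A) (dim_row A) (\<lambda>(i, j). cnj (A $$ (j, i)))"

definition mtrace :: "'a::comm_monoid_add mat \<Rightarrow> 'a" where
  "mtrace A = (\<Sum>i<dim_row A. A $$ (i, i))"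

definition frob_norm_sq :: "complex mat \<Rightarrow> complex" where
  "frob_norm_sq M = mtrace (dagger M * M)"

definition commutator :: "complex mat \<Rightarrow> complex mat \<Rightarrow> complex mat" where
  "commutator A B = A * B - B * A"

definition SO_mat :: "nat \<Rightarrow> real mat \<Rightarrow> bool" where
  "SO_mat m u \<longleftrightarrow> u \<in> carrier_mat m m \<and> transpose_mat u * u = 1\<^sub>m m
     \<and> u * transpose_mat u = 1\<^sub>m m \<and> det u = 1"

definition unitary_op :: "nat \<Rightarrow> complex mat \<Rightarrow> bool" where
  "unitary_op n U \<longleftrightarrow> U \<in> carrier_mat (2 ^ n) (2 ^ n) \<and> dagger U * U = 1\<^sub>m (2 ^ n)
     \<and> U * dagger U = 1\<^sub>m (2 ^ n)"

text \<open>U is a matchgate unitary with orthogonal matrix u (entries u_{mu nu}, 1-based mu, nu,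
  stored 0-based): U^dagger c_mu U = sum_nu u_{mu nu} c_nu for all mu.\<close>
definition matchgate_with :: "nat \<Rightarrow> complex mat \<Rightarrow> real mat \<Rightarrow> bool" where
  "matchgate_with n U u \<longleftrightarrow> unitary_op n U \<and> SO_mat (2 * n) u \<and>
     (\<forall>\<mu>\<in>{1..2*n}. dagger U * majorana n \<mu> * U =
        mat (2 ^ n) (2 ^ n) (\<lambda>(r, s). \<Sum>\<nu>\<in>{1..2*n}.
           complex_of_real (u $$ (\<mu> - 1, \<nu> - 1)) * majorana n \<nu> $$ (r, s)))"

text \<open>u_{alpha,[2n]}: rows alpha (1-based labels), all 2n columns.\<close>
definition rows_sub :: "nat \<Rightarrow> real mat \<Rightarrow> nat list \<Rightarrow> real mat" where
  "rows_sub n u \<alpha> = mat (length \<alpha>) (2 * n) (\<lambda>(j, m). u $$ (\<alpha> ! j - 1, m))"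

definition proj_modes :: "nat \<Rightarrow> nat list \<Rightarrow> real mat" where
  "proj_modes n \<eta> = mat (2 * n) (2 * n) (\<lambda>(j, k). if j = k \<and> j + 1 \<in> set \<eta> then 1 else 0)"

end

theory Submission imports Defs begin

text \<open>Conjugation by a matchgate \<open>U\<close> sends each Majorana operator \<open>c_\<mu>\<close> to the linear form
  \<open>c(u_\<mu>) = \<Sum>_\<nu> u_\<mu>\<nu> c_\<nu>\<close>, so \<open>U\<^sup>\<dagger> C_\<alpha> U\<close> is the product of the forms of the rows
  \<open>u_\<alpha>1, ..., u_\<alpha>k\<close>; conjugating by \<open>C_\<eta>\<close> multiplies every \<open>c_\<nu>\<close> by \<open>\<plusminus>1\<close>, i.e. replaces
  each row \<open>x\<close> by \<open>(-1)^|\<eta>| (I - 2P_\<eta>) x\<close>. Since \<open>A\<close> and \<open>B' = U\<^sup>\<dagger> B U\<close> are Hermitian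
  involutions, \<open>\<parallel>[A,B']\<parallel>\<^sup>2 = 2^(n+1) - 2 tr(AB'AB')\<close>, and \<open>tr(AB'AB')\<close> is the trace of a
  product \<open>c(e_1)...c(e_k) c(d_k)...c(d_1)\<close> of linear forms with pairwise orthogonal \<open>e_i\<close>.
  Moving \<open>c(e_1)\<close> once around the trace with the anticommutator \<open>{c(x),c(y)} = 2\<langle>x,y\<rangle>\<close>
  reproduces the Laplace expansion of the Gram determinant \<open>det(\<langle>e_i,d_j\<rangle>)\<close> along its first
  row, so the trace is \<open>2^n\<close> times that determinant, which is
  \<open>\<plusminus>det(u_\<alpha> (I - 2P_\<eta>) u_\<alpha>\<^sup>T)\<close>.\<close>

section \<open>Majorana operators as signed permutation matrices\<close>

definition majorana_factor :: "nat \<Rightarrow> nat \<Rightarrow> nat \<Rightarrow> nat \<Rightarrow> complex" where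
  "majorana_factor \<mu> q = (if q + 1 < (\<mu> + 1) div 2 then pZ
     else if q + 1 = (\<mu> + 1) div 2 then (if odd \<mu> then pX else pY) else pI)"

definition majorana_qubit :: "nat \<Rightarrow> nat" where
  "majorana_qubit \<mu> = (\<mu> + 1) div 2 - 1"

abbreviation majorana_flip :: "nat \<Rightarrow> nat \<Rightarrow> nat" where
  "majorana_flip \<mu> r \<equiv> flip_bit (majorana_qubit \<mu>) r"

lemma majorana_eq_pauli_string: "majorana n \<mu> = pauli_string n (majorana_factor \<mu>)"
  unfolding majorana_def majorana_factor_def Let_def by simp

lemma majorana_carrier[simp]: "majorana n \<mu> \<in> carrier_mat (2^n) (2^n)"
  unfolding majorana_eq_pauli_string pauli_string_def by simp

lemma majorana_dim[simp]: "dim_row (majorana n \<mu>) = 2^n" "dim_col (majorana n \<mu>) = 2^n"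
  unfolding majorana_eq_pauli_string pauli_string_def by simp_all

lemma majorana_entry: "r < 2^n \<Longrightarrow> s < 2^n \<Longrightarrow>
   majorana n \<mu> $$ (r,s) = (\<Prod>q<n. majorana_factor \<mu> q (qbit q r) (qbit q s))"
  unfolding majorana_eq_pauli_string pauli_string_def by simp

lemma qbit_eq_bit: "qbit q r = (if bit r q then 1 else 0)"
  unfolding qbit_def by (simp add: bit_iff_odd odd_iff_mod_2_eq_one)

lemma qbit_range: "qbit q r \<in> {0,1}"
  unfolding qbit_eq_bit by auto

lemma qbit_flip_bit: "qbit q (flip_bit k r) = (if q = k then 1 - qbit q r else qbit q r)"
  unfolding qbit_eq_bit by (auto simp: bit_flip_bit_iff)

lemma flip_bit_less_power: "k < n \<Longrightarrow> (r::nat) < 2^n \<Longrightarrow> flip_bit k r < 2^n"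
  by (metis take_bit_flip_bit_eq take_bit_nat_eq_self_iff not_le)

lemma eq_if_qbit_eq:
  assumes "(r::nat) < 2^n" "s < 2^n" "\<forall>q<n. qbit q r = qbit q s"
  shows "r = s"
proof (rule bit_eqI)
  fix q
  show "bit r q = bit s q"
  proof (cases "q < n")
    case True then show ?thesis using assms(3) unfolding qbit_eq_bit by (metis one_neq_zero)
  next
    case False
    have "take_bit n r = r" "take_bit n s = s" using assms by (auto simp: take_bit_nat_eq_self_iff)
    then show ?thesis using False by (metis bit_take_bit_iff)
  qed
qed

lemma flip_bit_flip_bit: "flip_bit k (flip_bit k (r::nat)) = r"
  by (rule bit_eqI) (auto simp: bit_flip_bit_iff)

lemma flip_bit_commute: "flip_bit k (flip_bit j (r::nat)) = flip_bit j (flip_bit k r)"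
  by (rule bit_eqI) (auto simp: bit_flip_bit_iff)

lemma majorana_qubit_less: "1 \<le> \<mu> \<Longrightarrow> \<mu> \<le> 2*n \<Longrightarrow> majorana_qubit \<mu> < n"
  unfolding majorana_qubit_def by auto

lemma majorana_factor_eq: "1 \<le> \<mu> \<Longrightarrow> majorana_factor \<mu> q =
   (if q < majorana_qubit \<mu> then pZ
    else if q = majorana_qubit \<mu> then (if odd \<mu> then pX else pY) else pI)"
proof -
  assume "1 \<le> \<mu>"
  then have "(\<mu> + 1) div 2 = majorana_qubit \<mu> + 1" unfolding majorana_qubit_def by auto
  then show ?thesis unfolding majorana_factor_def by simp
qed

lemma majorana_factor_eq_0:
  assumes "1 \<le> \<mu>" "x \<in> {0,1}" "y \<in> {0,1}"
    "if q = majorana_qubit \<mu> then y \<noteq> 1 - x else y \<noteq> x"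
  shows "majorana_factor \<mu> q x y = 0"
  using assms unfolding majorana_factor_eq[OF assms(1)] pX_def pY_def pZ_def pI_def
  by (auto split: if_splits)

lemma majorana_entry_eq_0:
  assumes "1 \<le> \<mu>" "\<mu> \<le> 2*n" "r < 2^n" "s < 2^n" "s \<noteq> majorana_flip \<mu> r"
  shows "majorana n \<mu> $$ (r,s) = 0"
proof -
  have "\<exists>q<n. qbit q s \<noteq> qbit q (majorana_flip \<mu> r)"
    using eq_if_qbit_eq[of s n "majorana_flip \<mu> r"] assms
      flip_bit_less_power[OF majorana_qubit_less[OF assms(1,2)] assms(3)] by auto
  then obtain q where q: "q < n" "qbit q s \<noteq> qbit q (majorana_flip \<mu> r)" by auto
  have "majorana_factor \<mu> q (qbit q r) (qbit q s) = 0"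
    by (rule majorana_factor_eq_0[OF assms(1) qbit_range qbit_range])
      (use q(2) in \<open>auto simp: qbit_flip_bit split: if_splits\<close>)
  then show ?thesis unfolding majorana_entry[OF assms(3,4)] using q(1)
    by (metis finite_lessThan lessThan_iff prod_zero_iff)
qed

lemma mult_entry_single_nonzero:
  fixes A M :: "complex mat"
  assumes "A \<in> carrier_mat N N" "M \<in> carrier_mat N N" "r < N" "s < N" "t0 < N"
    "\<And>t. t < N \<Longrightarrow> t \<noteq> t0 \<Longrightarrow> A $$ (r,t) = 0"
  shows "(A * M) $$ (r,s) = A $$ (r,t0) * M $$ (t0,s)"
proof -
  have "(A * M) $$ (r,s) = (\<Sum>t\<in>{0..<N}. A $$ (r,t) * M $$ (t,s))"
    using assms by (simp add: scalar_prod_def)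
  also have "\<dots> = (\<Sum>t\<in>{0..<N}. if t = t0 then A $$ (r,t0) * M $$ (t0,s) else 0)"
    by (rule sum.cong) (use assms in auto)
  also have "\<dots> = A $$ (r,t0) * M $$ (t0,s)" using assms by simp
  finally show ?thesis .
qed

lemma majorana_mult_entry:
  assumes "1 \<le> \<mu>" "\<mu> \<le> 2*n" "r < 2^n" "s < 2^n" "M \<in> carrier_mat (2^n) (2^n)"
  shows "(majorana n \<mu> * M) $$ (r,s) =
    majorana n \<mu> $$ (r, majorana_flip \<mu> r) * M $$ (majorana_flip \<mu> r, s)"
  by (rule mult_entry_single_nonzero[OF majorana_carrier assms(5) assms(3,4)])
     (auto intro: flip_bit_less_power majorana_qubit_less assms majorana_entry_eq_0)

lemma majorana_factor_sq:
  assumes "1 \<le> \<mu>" "x \<in> {0,1}"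
  shows "majorana_factor \<mu> q x (if q = majorana_qubit \<mu> then 1 - x else x) *
    majorana_factor \<mu> q (if q = majorana_qubit \<mu> then 1 - x else x) x = 1"
  using assms unfolding majorana_factor_eq[OF assms(1)] pX_def pY_def pZ_def pI_def
  by (auto split: if_splits)

lemma majorana_sq:
  assumes "1 \<le> \<mu>" "\<mu> \<le> 2*n"
  shows "majorana n \<mu> * majorana n \<mu> = 1\<^sub>m (2^n)"
proof (rule eq_matI)
  fix r s assume "r < dim_row (1\<^sub>m (2^n) :: complex mat)" "s < dim_col (1\<^sub>m (2^n) :: complex mat)"
  then have r: "r < 2^n" and s: "s < 2^n" by auto
  have fr: "majorana_flip \<mu> r < 2^n" by (rule flip_bit_less_power[OF majorana_qubit_less[OF assms] r])
  show "(majorana n \<mu> * majorana n \<mu>) $$ (r,s) = 1\<^sub>m (2^n) $$ (r,s)"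
  proof (cases "s = r")
    case True
    have "(majorana n \<mu> * majorana n \<mu>) $$ (r,r) =
      (\<Prod>q<n. majorana_factor \<mu> q (qbit q r) (qbit q (majorana_flip \<mu> r)) *
              majorana_factor \<mu> q (qbit q (majorana_flip \<mu> r)) (qbit q r))"
      unfolding majorana_mult_entry[OF assms r r majorana_carrier]
        majorana_entry[OF r fr] majorana_entry[OF fr r] prod.distrib ..
    also have "\<dots> = 1"
      by (rule prod.neutral) (simp add: qbit_flip_bit majorana_factor_sq[OF assms(1) qbit_range])
    finally show ?thesis using True r by simp
  next
    case False
    then have "s \<noteq> majorana_flip \<mu> (majorana_flip \<mu> r)" by (simp add: flip_bit_flip_bit)
    then show ?thesis using False r s
      by (simp add: majorana_mult_entry[OF assms r s majorana_carrier]
          majorana_entry_eq_0[OF assms fr s])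
  qed
qed auto

lemma majorana_qubit_eq_parity:
  "1 \<le> \<mu> \<Longrightarrow> 1 \<le> \<nu> \<Longrightarrow> \<mu> \<noteq> \<nu> \<Longrightarrow> majorana_qubit \<mu> = majorana_qubit \<nu> \<Longrightarrow> odd \<mu> \<longleftrightarrow> even \<nu>"
  unfolding majorana_qubit_def by presburger

text \<open>Qubitwise, \<open>c\<^sub>\<mu>c\<^sub>\<nu>\<close> and \<open>c\<^sub>\<nu>c\<^sub>\<mu>\<close> differ only on the lower of the two qubits they act on,
  where a \<open>Z\<close> meets an \<open>X\<close> or \<open>Y\<close> (or \<open>X\<close> meets \<open>Y\<close>).\<close>
lemma majorana_factor_anticomm:
  assumes "1 \<le> \<mu>" "1 \<le> \<nu>" "\<mu> \<noteq> \<nu>" "x \<in> {0,1}"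
  shows "majorana_factor \<mu> q x (if q = majorana_qubit \<mu> then 1 - x else x) *
      majorana_factor \<nu> q (if q = majorana_qubit \<mu> then 1 - x else x)
        (if q = majorana_qubit \<nu> then 1 - (if q = majorana_qubit \<mu> then 1 - x else x)
         else (if q = majorana_qubit \<mu> then 1 - x else x))
    = (if q = min (majorana_qubit \<mu>) (majorana_qubit \<nu>) then -1 else 1) *
      (majorana_factor \<nu> q x (if q = majorana_qubit \<nu> then 1 - x else x) *
       majorana_factor \<mu> q (if q = majorana_qubit \<nu> then 1 - x else x)
        (if q = majorana_qubit \<mu> then 1 - (if q = majorana_qubit \<nu> then 1 - x else x)
         else (if q = majorana_qubit \<nu> then 1 - x else x)))"
  using assms majorana_qubit_eq_parity[OF assms(1-3)]
  unfolding majorana_factor_eq[OF assms(1)] majorana_factor_eq[OF assms(2)] pX_def pY_def pZ_def pI_def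
  by (auto split: if_splits)

lemma majorana_anticomm:
  assumes "1 \<le> \<mu>" "\<mu> \<le> 2*n" "1 \<le> \<nu>" "\<nu> \<le> 2*n" "\<mu> \<noteq> \<nu>"
  shows "majorana n \<mu> * majorana n \<nu> = - (majorana n \<nu> * majorana n \<mu>)"
proof (rule eq_matI)
  let ?c = "majorana n"
  fix r s assume "r < dim_row (- (?c \<nu> * ?c \<mu>))" "s < dim_col (- (?c \<nu> * ?c \<mu>))"
  then have r: "r < 2^n" and s: "s < 2^n" by auto
  have fr: "majorana_flip \<mu> r < 2^n" by (rule flip_bit_less_power[OF majorana_qubit_less[OF assms(1,2)] r])
  have gr: "majorana_flip \<nu> r < 2^n" by (rule flip_bit_less_power[OF majorana_qubit_less[OF assms(3,4)] r])
  have e1: "(?c \<mu> * ?c \<nu>) $$ (r,s) = ?c \<mu> $$ (r, majorana_flip \<mu> r) * ?c \<nu> $$ (majorana_flip \<mu> r, s)"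
    by (rule majorana_mult_entry[OF assms(1,2) r s majorana_carrier])
  have e2: "(?c \<nu> * ?c \<mu>) $$ (r,s) = ?c \<nu> $$ (r, majorana_flip \<nu> r) * ?c \<mu> $$ (majorana_flip \<nu> r, s)"
    by (rule majorana_mult_entry[OF assms(3,4) r s majorana_carrier])
  show "(?c \<mu> * ?c \<nu>) $$ (r,s) = (- (?c \<nu> * ?c \<mu>)) $$ (r,s)"
  proof (cases "s = majorana_flip \<nu> (majorana_flip \<mu> r)")
    case True
    have s_swap: "s = majorana_flip \<mu> (majorana_flip \<nu> r)" using True by (simp add: flip_bit_commute)
    have q0: "min (majorana_qubit \<mu>) (majorana_qubit \<nu>) \<in> {..<n}"
      using majorana_qubit_less[OF assms(1,2)] by auto
    have "(?c \<mu> * ?c \<nu>) $$ (r,s) =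
       (\<Prod>q<n. (if q = min (majorana_qubit \<mu>) (majorana_qubit \<nu>) then -1 else 1) *
         (majorana_factor \<nu> q (qbit q r) (qbit q (majorana_flip \<nu> r)) *
          majorana_factor \<mu> q (qbit q (majorana_flip \<nu> r)) (qbit q (majorana_flip \<mu> (majorana_flip \<nu> r)))))"
      unfolding e1 majorana_entry[OF r fr] majorana_entry[OF fr s] prod.distrib[symmetric]
      unfolding True
      by (rule prod.cong[OF refl])
        (unfold qbit_flip_bit, rule majorana_factor_anticomm[OF assms(1,3,5) qbit_range])
    also have "\<dots> = - ((?c \<nu> * ?c \<mu>) $$ (r,s))"
      unfolding e2 majorana_entry[OF r gr] majorana_entry[OF gr s]
      unfolding s_swap
      using q0 by (simp add: prod.distrib)
    finally show ?thesis using r s by simp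
  next
    case False
    then have "s \<noteq> majorana_flip \<mu> (majorana_flip \<nu> r)" by (simp add: flip_bit_commute)
    then show ?thesis
      using False r s e1 e2 majorana_entry_eq_0[OF assms(1,2) gr s] majorana_entry_eq_0[OF assms(3,4) fr s]
      by simp
  qed
qed auto

lemma dagger_dim[simp]: "dim_row (dagger A) = dim_col A" "dim_col (dagger A) = dim_row A"
  unfolding dagger_def by auto

lemma dagger_carrier[simp]: "A \<in> carrier_mat n m \<Longrightarrow> dagger A \<in> carrier_mat m n"
  unfolding dagger_def by auto

lemma dagger_index[simp]: "i < dim_col A \<Longrightarrow> j < dim_row A \<Longrightarrow> dagger A $$ (i,j) = cnj (A $$ (j,i))"
  unfolding dagger_def by auto

lemma dagger_dagger[simp]: "dagger (dagger A) = A"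
  by (rule eq_matI) auto

lemma dagger_mult: assumes "A \<in> carrier_mat n m" "B \<in> carrier_mat m p"
  shows "dagger (A * B) = dagger B * dagger A"
proof (rule eq_matI)
  fix i j assume "i < dim_row (dagger B * dagger A)" "j < dim_col (dagger B * dagger A)"
  then have ij: "i < p" "j < n" using assms by auto
  show "dagger (A * B) $$ (i, j) = (dagger B * dagger A) $$ (i, j)"
    using assms ij by (simp add: scalar_prod_def mult.commute)
qed (use assms in auto)

lemma dagger_mult_dim: "dim_col A = dim_row B \<Longrightarrow> dagger (A * B) = dagger B * dagger A"
  by (rule dagger_mult[of A "dim_row A" "dim_col A" B "dim_col B"]) auto

lemma dagger_smult[simp]: "dagger (k \<cdot>\<^sub>m A) = cnj k \<cdot>\<^sub>m dagger A"
  by (rule eq_matI) auto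

lemma dagger_minus: assumes "A \<in> carrier_mat n m" "B \<in> carrier_mat n m"
  shows "dagger (A - B) = dagger A - dagger B"
  by (rule eq_matI) (use assms in auto)

lemma dagger_one[simp]: "dagger (1\<^sub>m N) = 1\<^sub>m N"
  by (rule eq_matI) auto

lemma majorana_factor_cnj:
  "x \<in> {0,1} \<Longrightarrow> y \<in> {0,1} \<Longrightarrow> cnj (majorana_factor \<mu> q y x) = majorana_factor \<mu> q x y"
  unfolding majorana_factor_def pX_def pY_def pZ_def pI_def by (auto split: if_splits)

lemma dagger_majorana: "dagger (majorana n \<mu>) = majorana n \<mu>"
proof (rule eq_matI)
  fix r s assume "r < dim_row (majorana n \<mu>)" "s < dim_col (majorana n \<mu>)"
  then have r: "r < 2^n" and s: "s < 2^n" by auto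
  show "dagger (majorana n \<mu>) $$ (r,s) = majorana n \<mu> $$ (r,s)"
    using r s by (simp add: majorana_entry cnj_prod majorana_factor_cnj[OF qbit_range qbit_range])
qed auto

lemma mtrace_comm: fixes A B :: "complex mat" assumes "A \<in> carrier_mat n m" "B \<in> carrier_mat m n"
  shows "mtrace (A * B) = mtrace (B * A)"
proof -
  have "mtrace (A * B) = (\<Sum>i<n. \<Sum>k<m. A $$ (i,k) * B $$ (k,i))"
    unfolding mtrace_def using assms by (simp add: scalar_prod_def atLeast0LessThan)
  also have "\<dots> = (\<Sum>k<m. \<Sum>i<n. B $$ (k,i) * A $$ (i,k))"
    by (subst sum.swap) (simp add: mult.commute)
  also have "\<dots> = mtrace (B * A)"
    unfolding mtrace_def using assms by (simp add: scalar_prod_def atLeast0LessThan)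
  finally show ?thesis .
qed

lemma mtrace_minus: fixes A B :: "complex mat" assumes "A \<in> carrier_mat n n" "B \<in> carrier_mat n n"
  shows "mtrace (A - B) = mtrace A - mtrace B"
  unfolding mtrace_def using assms by (simp add: sum_subtractf[symmetric])

lemma mtrace_smult: "(A::complex mat) \<in> carrier_mat N N \<Longrightarrow> mtrace (k \<cdot>\<^sub>m A) = k * mtrace A"
  unfolding mtrace_def by (auto simp: sum_distrib_left intro: sum.cong)

lemma mtrace_one: "mtrace (1\<^sub>m N :: complex mat) = of_nat N"
  unfolding mtrace_def by simp

text \<open>Dimension-driven variants of the carrier-based matrix laws, so that the simplifier can
  reassociate and distribute products of square matrices whose dimensions it knows.\<close>

lemma assoc_mult_dim[simp]:
  "dim_col A = dim_row B \<Longrightarrow> dim_col B = dim_row C \<Longrightarrow> (A * B) * (C :: 'a::semiring_0 mat) = A * (B * C)"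
  by (rule assoc_mult_mat[of A "dim_row A" "dim_col A" B "dim_col B" C "dim_col C"]) auto

lemma smult_mult_assoc_dim[simp]:
  "dim_col A = dim_row B \<Longrightarrow> (k \<cdot>\<^sub>m A) * B = (k::complex) \<cdot>\<^sub>m (A * B)"
  by (rule mult_smult_assoc_mat[of A "dim_row A" "dim_col A" B "dim_col B"]) auto

lemma mult_smult_distrib_dim[simp]:
  "dim_col A = dim_row B \<Longrightarrow> A * (k \<cdot>\<^sub>m B) = (k::complex) \<cdot>\<^sub>m (A * B)"
  by (rule mult_smult_distrib[of A "dim_row A" "dim_col A" B "dim_col B"]) auto

lemma smult_smult_mat[simp]: "a \<cdot>\<^sub>m (b \<cdot>\<^sub>m A) = (a * b :: 'a::semigroup_mult) \<cdot>\<^sub>m A"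
  by (rule eq_matI) (auto simp: mult.assoc)

lemma one_smult_mat[simp]: "(1::'a::monoid_mult) \<cdot>\<^sub>m A = A"
  by (rule eq_matI) auto

lemma smult_uminus_mat[simp]: "k \<cdot>\<^sub>m (- A) = (- k :: 'a::ring) \<cdot>\<^sub>m A"
  by (rule eq_matI) auto

lemma uminus_smult_mat[simp]: "- (k \<cdot>\<^sub>m A) = (- k :: 'a::ring) \<cdot>\<^sub>m A"
  by (rule eq_matI) auto

lemma mult_minus_distrib_dim: "dim_col A = dim_row B \<Longrightarrow> dim_row C = dim_row B \<Longrightarrow> dim_col C = dim_col B \<Longrightarrow>
   A * (B - C) = A * B - A * (C::complex mat)"
  by (rule mult_minus_distrib_mat[of A "dim_row A" "dim_col A" B "dim_col B"]) auto

lemma minus_mult_distrib_dim: "dim_col A = dim_row C \<Longrightarrow> dim_row B = dim_row A \<Longrightarrow> dim_col B = dim_col A \<Longrightarrow>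
   (A - B) * C = A * C - B * (C::complex mat)"
  by (rule minus_mult_distrib_mat[of A "dim_row A" "dim_col A" B C "dim_col C"]) auto

lemma mtrace_minus_dim: "dim_row A = dim_col A \<Longrightarrow> dim_row B = dim_row A \<Longrightarrow> dim_col B = dim_col A \<Longrightarrow>
   mtrace (A - B) = mtrace A - mtrace (B::complex mat)"
  by (rule mtrace_minus[of _ "dim_row A"]) auto

lemma mtrace_smult_dim: "dim_row A = dim_col A \<Longrightarrow> mtrace (k \<cdot>\<^sub>m (A::complex mat)) = k * mtrace A"
  by (rule mtrace_smult[of _ "dim_row A"]) auto

lemma mtrace_comm_dim:
  "dim_col A = dim_row B \<Longrightarrow> dim_col B = dim_row A \<Longrightarrow> mtrace (A * B) = mtrace (B * (A::complex mat))"
  by (rule mtrace_comm[of _ "dim_row A" "dim_col A"]) auto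

lemma mult_inverse_cancel_left:
  assumes "A * B = 1\<^sub>m N" "dim_col A = dim_row B" "dim_col B = dim_row X" "dim_row X = N"
  shows "A * (B * X) = (X :: complex mat)"
  using assms by (metis assoc_mult_dim left_mult_one_mat')

section \<open>Linear forms in the Majorana operators\<close>

definition mode_sum :: "nat \<Rightarrow> (nat \<Rightarrow> complex mat) \<Rightarrow> (nat \<Rightarrow> complex) \<Rightarrow> complex mat" where
  "mode_sum n C f = mat (2^n) (2^n) (\<lambda>(r,s). \<Sum>\<nu>\<in>{1..2*n}. f \<nu> * C \<nu> $$ (r,s))"

definition majorana_lin :: "nat \<Rightarrow> (nat \<Rightarrow> real) \<Rightarrow> complex mat" where
  "majorana_lin n x = mat (2 ^ n) (2 ^ n) (\<lambda>(r, s). \<Sum>\<nu>\<in>{1..2*n}.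
     complex_of_real (x \<nu>) * majorana n \<nu> $$ (r, s))"

definition mode_inner :: "nat \<Rightarrow> (nat \<Rightarrow> real) \<Rightarrow> (nat \<Rightarrow> real) \<Rightarrow> real" where
  "mode_inner n x y = (\<Sum>\<nu>\<in>{1..2*n}. x \<nu> * y \<nu>)"

lemma majorana_lin_eq_mode_sum:
  "majorana_lin n x = mode_sum n (majorana n) (\<lambda>\<nu>. complex_of_real (x \<nu>))"
  unfolding majorana_lin_def mode_sum_def ..

lemma mode_sum_carrier[simp]: "mode_sum n C f \<in> carrier_mat (2^n) (2^n)"
  unfolding mode_sum_def by simp

lemma majorana_lin_carrier[simp]: "majorana_lin n x \<in> carrier_mat (2^n) (2^n)"
  unfolding majorana_lin_def by simp

lemma majorana_lin_dim[simp]: "dim_row (majorana_lin n x) = 2^n" "dim_col (majorana_lin n x) = 2^n"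
  unfolding majorana_lin_def by simp_all

lemma mode_inner_commute: "mode_inner n x y = mode_inner n y x"
  unfolding mode_inner_def by (simp add: mult.commute)

lemma mode_sum_mult_right:
  assumes "M \<in> carrier_mat (2^n) (2^n)" "\<And>\<nu>. C \<nu> \<in> carrier_mat (2^n) (2^n)"
  shows "mode_sum n C f * M = mode_sum n (\<lambda>\<nu>. C \<nu> * M) f"
proof (rule eq_matI)
  fix r s assume "r < dim_row (mode_sum n (\<lambda>\<nu>. C \<nu> * M) f)" "s < dim_col (mode_sum n (\<lambda>\<nu>. C \<nu> * M) f)"
  then have rs: "r < 2^n" "s < 2^n" unfolding mode_sum_def by auto
  have dC: "\<And>\<nu>. dim_row (C \<nu>) = 2^n" "\<And>\<nu>. dim_col (C \<nu>) = 2^n" using assms(2) by auto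
  have "(mode_sum n C f * M) $$ (r,s) =
      (\<Sum>t\<in>{0..<2^n}. (\<Sum>\<nu>\<in>{1..2*n}. f \<nu> * C \<nu> $$ (r,t)) * M $$ (t,s))"
    using assms rs by (simp add: mode_sum_def scalar_prod_def)
  also have "\<dots> = (\<Sum>\<nu>\<in>{1..2*n}. f \<nu> * (\<Sum>t\<in>{0..<2^n}. C \<nu> $$ (r,t) * M $$ (t,s)))"
    by (simp add: sum_distrib_right sum_distrib_left mult.assoc sum.swap[of _ "{0..<2^n}"])
  also have "\<dots> = mode_sum n (\<lambda>\<nu>. C \<nu> * M) f $$ (r,s)"
    using assms rs dC by (simp add: mode_sum_def scalar_prod_def)
  finally show "(mode_sum n C f * M) $$ (r,s) = mode_sum n (\<lambda>\<nu>. C \<nu> * M) f $$ (r,s)" .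
qed (use assms in \<open>auto simp: mode_sum_def\<close>)

lemma mode_sum_mult_left:
  assumes "M \<in> carrier_mat (2^n) (2^n)" "\<And>\<nu>. C \<nu> \<in> carrier_mat (2^n) (2^n)"
  shows "M * mode_sum n C f = mode_sum n (\<lambda>\<nu>. M * C \<nu>) f"
proof (rule eq_matI)
  fix r s assume "r < dim_row (mode_sum n (\<lambda>\<nu>. M * C \<nu>) f)" "s < dim_col (mode_sum n (\<lambda>\<nu>. M * C \<nu>) f)"
  then have rs: "r < 2^n" "s < 2^n" unfolding mode_sum_def by auto
  have dC: "\<And>\<nu>. dim_row (C \<nu>) = 2^n" "\<And>\<nu>. dim_col (C \<nu>) = 2^n" using assms(2) by auto
  have "(M * mode_sum n C f) $$ (r,s) =
      (\<Sum>t\<in>{0..<2^n}. M $$ (r,t) * (\<Sum>\<nu>\<in>{1..2*n}. f \<nu> * C \<nu> $$ (t,s)))"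
    using assms rs by (simp add: mode_sum_def scalar_prod_def)
  also have "\<dots> = (\<Sum>\<nu>\<in>{1..2*n}. f \<nu> * (\<Sum>t\<in>{0..<2^n}. M $$ (r,t) * C \<nu> $$ (t,s)))"
    by (simp add: sum_distrib_right sum_distrib_left mult.assoc mult.left_commute
        sum.swap[of _ "{0..<2^n}"])
  also have "\<dots> = mode_sum n (\<lambda>\<nu>. M * C \<nu>) f $$ (r,s)"
    using assms rs dC by (simp add: mode_sum_def scalar_prod_def)
  finally show "(M * mode_sum n C f) $$ (r,s) = mode_sum n (\<lambda>\<nu>. M * C \<nu>) f $$ (r,s)" .
qed (use assms in \<open>auto simp: mode_sum_def\<close>)

lemma majorana_anticomm_entry:
  assumes "\<mu> \<in> {1..2*n}" "\<nu> \<in> {1..2*n}" "r < 2^n" "s < 2^n"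
  shows "(majorana n \<mu> * majorana n \<nu>) $$ (r,s) + (majorana n \<nu> * majorana n \<mu>) $$ (r,s)
    = (if \<mu> = \<nu> then 2 * 1\<^sub>m (2^n) $$ (r,s) else 0)"
proof (cases "\<mu> = \<nu>")
  case True then show ?thesis using assms majorana_sq[of \<mu> n] by simp
next
  case False then show ?thesis using assms majorana_anticomm[of \<mu> n \<nu>] by simp
qed

lemma majorana_lin_anticomm:
  "majorana_lin n x * majorana_lin n y + majorana_lin n y * majorana_lin n x
     = complex_of_real (2 * mode_inner n x y) \<cdot>\<^sub>m 1\<^sub>m (2^n)"
proof -
  let ?c = "majorana n" and ?L = "majorana_lin n"
  have prod_eq: "\<And>a b. ?L a * ?L b = mode_sum n (\<lambda>\<mu>. mode_sum n (\<lambda>\<nu>. ?c \<mu> * ?c \<nu>)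
      (\<lambda>\<nu>. complex_of_real (b \<nu>))) (\<lambda>\<mu>. complex_of_real (a \<mu>))"
    unfolding majorana_lin_eq_mode_sum by (subst mode_sum_mult_right) (auto simp: mode_sum_mult_left)
  show ?thesis
  proof (rule eq_matI)
    fix r s assume "r < dim_row (complex_of_real (2 * mode_inner n x y) \<cdot>\<^sub>m 1\<^sub>m (2^n))"
      "s < dim_col (complex_of_real (2 * mode_inner n x y) \<cdot>\<^sub>m 1\<^sub>m (2^n) :: complex mat)"
    then have rs: "r < 2^n" "s < 2^n" by auto
    have "(?L x * ?L y + ?L y * ?L x) $$ (r,s) =
      (\<Sum>\<mu>\<in>{1..2*n}. \<Sum>\<nu>\<in>{1..2*n}. complex_of_real (x \<mu>) * complex_of_real (y \<nu>) * (?c \<mu> * ?c \<nu>) $$ (r,s))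
    + (\<Sum>\<mu>\<in>{1..2*n}. \<Sum>\<nu>\<in>{1..2*n}. complex_of_real (y \<mu>) * complex_of_real (x \<nu>) * (?c \<mu> * ?c \<nu>) $$ (r,s))"
      unfolding prod_eq using rs by (simp add: mode_sum_def sum_distrib_left mult.assoc)
    also have "\<dots> = (\<Sum>\<mu>\<in>{1..2*n}. \<Sum>\<nu>\<in>{1..2*n}. complex_of_real (x \<mu>) * complex_of_real (y \<nu>) *
        ((?c \<mu> * ?c \<nu>) $$ (r,s) + (?c \<nu> * ?c \<mu>) $$ (r,s)))"
      by (subst (2) sum.swap) (simp add: sum.distrib[symmetric] algebra_simps)
    also have "\<dots> = (\<Sum>\<mu>\<in>{1..2*n}. \<Sum>\<nu>\<in>{1..2*n}. if \<mu> = \<nu>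
        then complex_of_real (x \<mu>) * complex_of_real (y \<nu>) * (2 * 1\<^sub>m (2^n) $$ (r,s)) else 0)"
      by (intro sum.cong refl, subst majorana_anticomm_entry) (use rs in auto)
    also have "\<dots> = (\<Sum>\<mu>\<in>{1..2*n}. complex_of_real (x \<mu>) * complex_of_real (y \<mu>) * (2 * 1\<^sub>m (2^n) $$ (r,s)))"
      by (simp add: sum.delta)
    also have "\<dots> = (complex_of_real (2 * mode_inner n x y) \<cdot>\<^sub>m 1\<^sub>m (2^n)) $$ (r,s)"
      using rs by (simp add: mode_inner_def sum_distrib_right sum_distrib_left algebra_simps)
    finally show "(?L x * ?L y + ?L y * ?L x) $$ (r,s) =
      (complex_of_real (2 * mode_inner n x y) \<cdot>\<^sub>m 1\<^sub>m (2^n)) $$ (r,s)" .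
  qed auto
qed

lemma majorana_lin_swap:
  "majorana_lin n x * majorana_lin n y
     = complex_of_real (2 * mode_inner n x y) \<cdot>\<^sub>m 1\<^sub>m (2^n) - majorana_lin n y * majorana_lin n x"
proof (rule eq_matI)
  let ?L = "majorana_lin n"
  fix r s assume "r < dim_row (complex_of_real (2 * mode_inner n x y) \<cdot>\<^sub>m 1\<^sub>m (2^n) - ?L y * ?L x)"
     "s < dim_col (complex_of_real (2 * mode_inner n x y) \<cdot>\<^sub>m 1\<^sub>m (2^n) - ?L y * ?L x)"
  then have rs: "r < 2^n" "s < 2^n" by auto
  have "(?L x * ?L y + ?L y * ?L x) $$ (r,s) = (complex_of_real (2 * mode_inner n x y) \<cdot>\<^sub>m 1\<^sub>m (2^n)) $$ (r,s)"
    by (simp only: majorana_lin_anticomm)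
  then show "(?L x * ?L y) $$ (r,s) =
      (complex_of_real (2 * mode_inner n x y) \<cdot>\<^sub>m 1\<^sub>m (2^n) - ?L y * ?L x) $$ (r,s)"
    using rs by (simp add: algebra_simps)
qed auto

lemma majorana_lin_anticomm_orthogonal:
  "mode_inner n x y = 0 \<Longrightarrow> majorana_lin n x * majorana_lin n y = (-1) \<cdot>\<^sub>m (majorana_lin n y * majorana_lin n x)"
  by (rule eq_matI) (auto simp: majorana_lin_swap[of n x y])

lemma dagger_majorana_lin: "dagger (majorana_lin n x) = majorana_lin n x"
proof (rule eq_matI)
  fix r s assume "r < dim_row (majorana_lin n x)" "s < dim_col (majorana_lin n x)"
  then have rs: "r < 2^n" "s < 2^n" by auto
  have "\<And>\<nu>. cnj (majorana n \<nu> $$ (s, r)) = majorana n \<nu> $$ (r,s)"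
    using dagger_majorana[of n] rs by (metis dagger_index majorana_dim)
  then show "dagger (majorana_lin n x) $$ (r,s) = majorana_lin n x $$ (r,s)"
    using rs by (simp add: majorana_lin_def)
qed auto

lemma involution_conj_majorana_lin:
  assumes "A \<in> carrier_mat (2^n) (2^n)" "A * A = 1\<^sub>m (2^n)"
    "\<And>\<nu>. 1 \<le> \<nu> \<Longrightarrow> \<nu> \<le> 2*n \<Longrightarrow> A * majorana n \<nu> = complex_of_real (g \<nu>) \<cdot>\<^sub>m (majorana n \<nu> * A)"
  shows "A * majorana_lin n x * A = majorana_lin n (\<lambda>\<nu>. g \<nu> * x \<nu>)"
proof -
  have conj: "A * majorana n \<nu> * A = complex_of_real (g \<nu>) \<cdot>\<^sub>m majorana n \<nu>"
    if "1 \<le> \<nu>" "\<nu> \<le> 2*n" for \<nu>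
    using assms by (simp add: assms(3)[OF that])
  have "A * majorana_lin n x * A
      = mode_sum n (\<lambda>\<nu>. A * majorana n \<nu> * A) (\<lambda>\<nu>. complex_of_real (x \<nu>))"
    unfolding majorana_lin_eq_mode_sum using assms(1)
    by (simp add: mode_sum_mult_left mode_sum_mult_right del: assoc_mult_dim)
  also have "\<dots> = majorana_lin n (\<lambda>\<nu>. g \<nu> * x \<nu>)"
  proof (rule eq_matI)
    fix r s assume "r < dim_row (majorana_lin n (\<lambda>\<nu>. g \<nu> * x \<nu>))"
      "s < dim_col (majorana_lin n (\<lambda>\<nu>. g \<nu> * x \<nu>))"
    then have rs: "r < 2^n" "s < 2^n" by auto
    show "mode_sum n (\<lambda>\<nu>. A * majorana n \<nu> * A) (\<lambda>\<nu>. complex_of_real (x \<nu>)) $$ (r, s)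
        = majorana_lin n (\<lambda>\<nu>. g \<nu> * x \<nu>) $$ (r, s)"
      using rs conj unfolding mode_sum_def majorana_lin_def by (auto intro!: sum.cong)
  qed (auto simp: mode_sum_def)
  finally show ?thesis .
qed

section \<open>Products of linear forms and their traces\<close>

definition majorana_prod :: "nat \<Rightarrow> (nat \<Rightarrow> real) list \<Rightarrow> complex mat" where
  "majorana_prod n xs = foldr (\<lambda>x M. majorana_lin n x * M) xs (1\<^sub>m (2^n))"

lemma majorana_prod_Nil[simp]: "majorana_prod n [] = 1\<^sub>m (2^n)"
  unfolding majorana_prod_def by simp

lemma majorana_prod_Cons[simp]: "majorana_prod n (x # xs) = majorana_lin n x * majorana_prod n xs"
  unfolding majorana_prod_def by simp

lemma majorana_prod_carrier[simp]: "majorana_prod n xs \<in> carrier_mat (2^n) (2^n)"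
  by (induction xs) auto

lemma majorana_prod_dim[simp]: "dim_row (majorana_prod n xs) = 2^n" "dim_col (majorana_prod n xs) = 2^n"
  using carrier_matD[OF majorana_prod_carrier[of n xs]] by auto

lemma majorana_prod_append: "majorana_prod n (xs @ ys) = majorana_prod n xs * majorana_prod n ys"
  by (induction xs) auto

lemma majorana_prod_snoc: "majorana_prod n (xs @ [y]) = majorana_prod n xs * majorana_lin n y"
  unfolding majorana_prod_append by simp

lemma dagger_majorana_prod: "dagger (majorana_prod n xs) = majorana_prod n (rev xs)"
  by (induction xs) (auto simp: dagger_mult_dim dagger_majorana_lin majorana_prod_snoc)

lemma majorana_lin_prod_anticomm:
  "(\<forall>y\<in>set ys. mode_inner n x y = 0) \<Longrightarrow>
    majorana_lin n x * majorana_prod n ys = (-1) ^ length ys \<cdot>\<^sub>m (majorana_prod n ys * majorana_lin n x)"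
proof (induction ys)
  case Nil then show ?case by (auto intro!: eq_matI)
next
  case (Cons y ys)
  have "majorana_lin n x * majorana_prod n (y # ys) = (majorana_lin n x * majorana_lin n y) * majorana_prod n ys"
    by simp
  also have "\<dots> = (-1) \<cdot>\<^sub>m (majorana_lin n y * (majorana_lin n x * majorana_prod n ys))"
    using Cons.prems by (simp add: majorana_lin_anticomm_orthogonal)
  also have "\<dots> = (-1) ^ length (y#ys) \<cdot>\<^sub>m (majorana_prod n (y # ys) * majorana_lin n x)"
    using Cons by simp
  finally show ?case .
qed

lemma involution_conj_majorana_prod:
  assumes "A \<in> carrier_mat (2^n) (2^n)" "A * A = 1\<^sub>m (2^n)"
    "\<And>x. x \<in> set xs \<Longrightarrow> A * majorana_lin n x * A = majorana_lin n (f x)"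
  shows "A * majorana_prod n xs * A = majorana_prod n (map f xs)"
  using assms(3)
proof (induction xs)
  case Nil then show ?case using assms(1,2) by simp
next
  case (Cons x xs)
  have cancel: "A * (A * X) = X" if "dim_row X = 2^n" for X
    using assms(1) that by (intro mult_inverse_cancel_left[OF assms(2)]) auto
  have "A * majorana_prod n (x # xs) * A = (A * majorana_lin n x * A) * (A * majorana_prod n xs * A)"
    using assms(1) by (simp add: cancel)
  then show ?case using Cons by simp
qed

definition del_nth :: "nat \<Rightarrow> 'a list \<Rightarrow> 'a list" where
  "del_nth j xs = take j xs @ drop (Suc j) xs"

lemma del_nth_0_Cons[simp]: "del_nth 0 (x # xs) = xs"
  unfolding del_nth_def by simp

lemma del_nth_Suc_Cons[simp]: "del_nth (Suc j) (x # xs) = x # del_nth j xs"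
  unfolding del_nth_def by simp

lemma length_del_nth[simp]: "j < length xs \<Longrightarrow> length (del_nth j xs) = length xs - 1"
  unfolding del_nth_def by simp

lemma nth_del_nth: "j < length xs \<Longrightarrow> i < length xs - 1 \<Longrightarrow>
   del_nth j xs ! i = (if i < j then xs ! i else xs ! Suc i)"
  unfolding del_nth_def by (auto simp: nth_append min_def)

text \<open>Commuting \<open>c(e)\<close> leftwards through \<open>c(d_k)\<cdots>c(d_1)\<close> under a trace: each swap with \<open>c(d_j)\<close>
  leaves the anticommutator term \<open>2\<langle>d_j,e\<rangle>\<close> times the trace with \<open>c(d_j)\<close> removed.\<close>
lemma mtrace_majorana_prod_lin_swap:
  "M \<in> carrier_mat (2^n) (2^n) \<Longrightarrow>
   mtrace (M * (majorana_prod n (rev ds) * majorana_lin n e)) =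
     (-1) ^ length ds * mtrace (M * (majorana_lin n e * majorana_prod n (rev ds))) +
     (\<Sum>j<length ds. (-1) ^ j * complex_of_real (2 * mode_inner n (ds ! j) e)
        * mtrace (M * majorana_prod n (rev (del_nth j ds))))"
proof (induction ds arbitrary: M)
  case Nil then show ?case by simp
next
  case (Cons d ds)
  let ?Q = "majorana_prod n (rev ds)" and ?L = "majorana_lin n"
  let ?c = "complex_of_real (2 * mode_inner n d e)"
  have M: "M \<in> carrier_mat (2^n) (2^n)" by fact
  then have Md[simp]: "dim_row M = 2^n" "dim_col M = 2^n" by auto
  have swap_d: "mtrace (M * (majorana_prod n (rev (d # ds)) * ?L e))
      = ?c * mtrace (M * ?Q) - mtrace ((M * (?Q * ?L e)) * ?L d)"
  proof -
    have "mtrace (M * (majorana_prod n (rev (d # ds)) * ?L e)) = mtrace (M * (?Q * (?L d * ?L e)))"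
      using M by (simp add: majorana_prod_snoc)
    also have "\<dots> = mtrace (?c \<cdot>\<^sub>m (M * ?Q) - M * (?Q * (?L e * ?L d)))"
      unfolding majorana_lin_swap[of n d e] using M by (simp add: mult_minus_distrib_dim)
    also have "\<dots> = ?c * mtrace (M * ?Q) - mtrace ((M * (?Q * ?L e)) * ?L d)"
      using M by (simp add: mtrace_minus_dim mtrace_smult_dim)
    finally show ?thesis .
  qed
  have rotate: "mtrace ((?L d * M) * majorana_prod n (rev (del_nth j ds)))
      = mtrace (M * majorana_prod n (rev (del_nth (Suc j) (d # ds))))" for j
    using M by (simp add: mtrace_comm_dim[of "?L d"] majorana_prod_snoc)
  have swap_rest: "mtrace ((M * (?Q * ?L e)) * ?L d)
      = (-1) ^ length ds * mtrace (M * (?L e * majorana_prod n (rev (d # ds)))) +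
        (\<Sum>j<length ds. (-1) ^ j * complex_of_real (2 * mode_inner n (ds ! j) e)
           * mtrace (M * majorana_prod n (rev (del_nth (Suc j) (d # ds)))))"
  proof -
    have "mtrace ((M * (?Q * ?L e)) * ?L d) = mtrace ((?L d * M) * (?Q * ?L e))"
      using M mtrace_comm_dim[of "M * (?Q * ?L e)" "?L d"] by simp
    also have "\<dots> = (-1) ^ length ds * mtrace ((?L d * M) * (?L e * ?Q)) +
       (\<Sum>j<length ds. (-1) ^ j * complex_of_real (2 * mode_inner n (ds ! j) e)
          * mtrace ((?L d * M) * majorana_prod n (rev (del_nth j ds))))"
      by (rule Cons.IH[OF mult_carrier_mat[OF majorana_lin_carrier M]])
    also have "mtrace ((?L d * M) * (?L e * ?Q)) = mtrace (M * (?L e * majorana_prod n (rev (d # ds))))"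
      using M by (simp add: mtrace_comm_dim[of "?L d"] majorana_prod_snoc)
    finally show ?thesis unfolding rotate .
  qed
  show ?case
    by (simp only: swap_d swap_rest length_Cons sum.lessThan_Suc_shift)
      (simp add: algebra_simps sum_negf del: sum.lessThan_Suc)
qed

definition gram_mat :: "nat \<Rightarrow> (nat \<Rightarrow> real) list \<Rightarrow> (nat \<Rightarrow> real) list \<Rightarrow> real mat" where
  "gram_mat n es ds = mat (length es) (length ds) (\<lambda>(i,j). mode_inner n (es ! i) (ds ! j))"

lemma mat_delete_gram_mat:
  "j < length ds \<Longrightarrow> mat_delete (gram_mat n (e # es) ds) 0 j = gram_mat n es (del_nth j ds)"
  by (rule eq_matI) (auto simp: mat_delete_def gram_mat_def nth_del_nth)

lemma laplace_expansion_gram_mat: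
  assumes "length ds = Suc (length es)"
  shows "det (gram_mat n (e # es) ds)
    = (\<Sum>j<length ds. (-1) ^ j * mode_inner n (ds ! j) e * det (gram_mat n es (del_nth j ds)))"
proof -
  have "det (gram_mat n (e # es) ds)
      = (\<Sum>j<length ds. gram_mat n (e # es) ds $$ (0,j) * cofactor (gram_mat n (e # es) ds) 0 j)"
    by (rule laplace_expansion_row) (auto simp: gram_mat_def assms)
  also have "\<dots> = (\<Sum>j<length ds. (-1) ^ j * mode_inner n (ds ! j) e * det (gram_mat n es (del_nth j ds)))"
    by (rule sum.cong[OF refl], subst cofactor_def, subst mat_delete_gram_mat)
      (simp_all add: gram_mat_def mode_inner_commute assms)
  finally show ?thesis .
qed

lemma mtrace_majorana_prod_eq_det_gram:
  "length ds = length es \<Longrightarrow> sorted_wrt (\<lambda>x y. mode_inner n x y = 0) es \<Longrightarrow>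
    mtrace (majorana_prod n es * majorana_prod n (rev ds)) = 2^n * complex_of_real (det (gram_mat n es ds))"
proof (induction es arbitrary: ds)
  case Nil
  then have "gram_mat n [] ds = 1\<^sub>m 0" by (auto simp: gram_mat_def)
  then show ?case using Nil by (simp add: mtrace_one)
next
  case (Cons e es ds)
  let ?P = "majorana_prod n es" and ?Q = "majorana_prod n (rev ds)" and ?L = "majorana_lin n"
  let ?T = "mtrace (majorana_prod n (e # es) * ?Q)"
  have orth: "\<forall>y\<in>set es. mode_inner n e y = 0" and sorted: "sorted_wrt (\<lambda>x y. mode_inner n x y = 0) es"
    using Cons.prems by auto
  have len: "length ds = Suc (length es)" using Cons.prems by simp
  have "?T = mtrace (?P * (?Q * ?L e))"
    by (simp add: mtrace_comm_dim[of "?L e"])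
  also have "\<dots> = (-1) ^ length ds * mtrace (?P * (?L e * ?Q)) +
     (\<Sum>j<length ds. (-1) ^ j * complex_of_real (2 * mode_inner n (ds ! j) e)
        * mtrace (?P * majorana_prod n (rev (del_nth j ds))))"
    by (rule mtrace_majorana_prod_lin_swap) simp
  also have "mtrace (?P * (?L e * ?Q)) = (-1) ^ length es * ?T"
  proof -
    have "?P * ?L e = (-1) ^ length es \<cdot>\<^sub>m (?L e * ?P)"
      using majorana_lin_prod_anticomm[OF orth] by (simp flip: power_add)
    then show ?thesis
      by (simp add: assoc_mult_dim[symmetric, of ?P "?L e" ?Q] mtrace_smult_dim del: assoc_mult_dim)
  qed
  also have "(\<Sum>j<length ds. (-1) ^ j * complex_of_real (2 * mode_inner n (ds ! j) e)
        * mtrace (?P * majorana_prod n (rev (del_nth j ds))))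
     = 2 * 2^n * complex_of_real (det (gram_mat n (e # es) ds))"
  proof -
    have "mtrace (?P * majorana_prod n (rev (del_nth j ds)))
        = 2^n * complex_of_real (det (gram_mat n es (del_nth j ds)))" if "j < length ds" for j
      using Cons.IH sorted len that by simp
    then show ?thesis
      by (simp add: laplace_expansion_gram_mat[OF len] sum_distrib_left algebra_simps)
  qed
  finally have "?T = (-1) ^ length ds * ((-1) ^ length es * ?T) + 2 * 2^n * complex_of_real (det (gram_mat n (e # es) ds))" .
  then show ?case using len by simp
qed

section \<open>Configuration operators and matchgate conjugation\<close>

lemma config_op_Nil[simp]: "config_op n [] = 1\<^sub>m (2^n)"
  unfolding config_op_def by simp

lemma config_op_Cons[simp]: "config_op n (m # ms) = majorana n m * config_op n ms"
  unfolding config_op_def by simp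

lemma config_op_carrier[simp]: "config_op n ms \<in> carrier_mat (2^n) (2^n)"
  by (induction ms) auto

lemma config_op_dim[simp]: "dim_row (config_op n ms) = 2^n" "dim_col (config_op n ms) = 2^n"
  using carrier_matD[OF config_op_carrier[of n ms]] by auto

lemma dagger_config_op_mult_self:
  "\<forall>m\<in>set ms. 1 \<le> m \<and> m \<le> 2*n \<Longrightarrow> dagger (config_op n ms) * config_op n ms = 1\<^sub>m (2^n)"
proof (induction ms)
  case Nil then show ?case by simp
next
  case (Cons m ms)
  have "dagger (config_op n (m # ms)) * config_op n (m # ms) =
     dagger (config_op n ms) * ((majorana n m * majorana n m) * config_op n ms)"
    by (simp add: dagger_mult_dim dagger_majorana)
  also have "\<dots> = 1\<^sub>m (2^n)" using Cons by (simp add: majorana_sq)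
  finally show ?case .
qed

definition anticomm_sign :: "nat list \<Rightarrow> nat \<Rightarrow> real" where
  "anticomm_sign \<eta> \<mu> = (-1) ^ length \<eta> * (if \<mu> \<in> set \<eta> then -1 else 1)"

definition sign_flip :: "nat list \<Rightarrow> (nat \<Rightarrow> real) \<Rightarrow> nat \<Rightarrow> real" where
  "sign_flip \<eta> x \<nu> = anticomm_sign \<eta> \<nu> * x \<nu>"

lemma anticomm_sign_sq: "anticomm_sign \<eta> \<nu> * anticomm_sign \<eta> \<nu> = 1"
  unfolding anticomm_sign_def by (simp add: power_mult_distrib[symmetric] flip: power_add mult_2)

lemma config_op_mult_majorana:
  assumes "distinct \<eta>" "\<forall>m\<in>set \<eta>. 1 \<le> m \<and> m \<le> 2*n" "1 \<le> \<mu>" "\<mu> \<le> 2*n"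
  shows "config_op n \<eta> * majorana n \<mu> = complex_of_real (anticomm_sign \<eta> \<mu>) \<cdot>\<^sub>m (majorana n \<mu> * config_op n \<eta>)"
  using assms(1,2)
proof (induction \<eta>)
  case Nil then show ?case by (simp add: anticomm_sign_def)
next
  case (Cons x \<eta>)
  then have "config_op n (x # \<eta>) * majorana n \<mu>
      = complex_of_real (anticomm_sign \<eta> \<mu>) \<cdot>\<^sub>m ((majorana n x * majorana n \<mu>) * config_op n \<eta>)"
    by simp
  also have "\<dots> = complex_of_real (anticomm_sign (x # \<eta>) \<mu>) \<cdot>\<^sub>m (majorana n \<mu> * config_op n (x # \<eta>))"
  proof (cases "x = \<mu>")
    case True
    then have "\<mu> \<notin> set \<eta>" using Cons.prems by auto
    then show ?thesis using True by (simp add: anticomm_sign_def)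
  next
    case False
    then show ?thesis using Cons.prems assms(3,4)
      by (simp add: majorana_anticomm[of x n \<mu>] anticomm_sign_def)
  qed
  finally show ?case .
qed

lemma config_conj_majorana_prod:
  assumes "distinct \<eta>" "\<forall>m\<in>set \<eta>. 1 \<le> m \<and> m \<le> 2*n"
    and involution: "(k \<cdot>\<^sub>m config_op n \<eta>) * (k \<cdot>\<^sub>m config_op n \<eta>) = 1\<^sub>m (2^n)"
  shows "(k \<cdot>\<^sub>m config_op n \<eta>) * majorana_prod n xs * (k \<cdot>\<^sub>m config_op n \<eta>)
    = majorana_prod n (map (sign_flip \<eta>) xs)"
proof (rule involution_conj_majorana_prod)
  let ?A = "k \<cdot>\<^sub>m config_op n \<eta>"
  have "?A * majorana n \<nu> = complex_of_real (anticomm_sign \<eta> \<nu>) \<cdot>\<^sub>m (majorana n \<nu> * ?A)"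
    if "1 \<le> \<nu>" "\<nu> \<le> 2*n" for \<nu>
    using config_op_mult_majorana[OF assms(1,2) that] by (simp add: mult.commute)
  from involution_conj_majorana_lin[OF _ involution this]
  show "?A * majorana_lin n x * ?A = majorana_lin n (sign_flip \<eta> x)" for x
    by (simp add: sign_flip_def[abs_def])
qed (use involution in simp_all)

definition matchgate_row :: "real mat \<Rightarrow> nat \<Rightarrow> nat \<Rightarrow> real" where
  "matchgate_row u \<mu> \<nu> = u $$ (\<mu> - 1, \<nu> - 1)"

lemma matchgate_conj_config_op:
  assumes "matchgate_with n U u" "\<forall>m\<in>set ms. 1 \<le> m \<and> m \<le> 2*n"
  shows "dagger U * config_op n ms * U = majorana_prod n (map (matchgate_row u) ms)"
proof -
  have U: "U \<in> carrier_mat (2^n) (2^n)" "dagger U * U = 1\<^sub>m (2^n)" "U * dagger U = 1\<^sub>m (2^n)"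
    using assms(1) unfolding matchgate_with_def unitary_op_def by auto
  have conj: "dagger U * majorana n m * U = majorana_lin n (matchgate_row u m)"
    if "1 \<le> m" "m \<le> 2*n" for m
    using assms(1) that unfolding matchgate_with_def majorana_lin_def matchgate_row_def by auto
  have cancel: "U * (dagger U * X) = X" if "dim_row X = 2^n" for X
    using U(1) that by (intro mult_inverse_cancel_left[OF U(3)]) auto
  from assms(2) show ?thesis
  proof (induction ms)
    case Nil then show ?case using U by auto
  next
    case (Cons m ms)
    have "dagger U * config_op n (m # ms) * U
        = (dagger U * majorana n m * U) * (dagger U * config_op n ms * U)"
      using U(1) by (simp add: cancel)
    then show ?case using Cons conj by simp
  qed
qed

lemma unitary_conj_hermitian:
  assumes "unitary_op n U" "B \<in> carrier_mat (2^n) (2^n)" "dagger B = B"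
  shows "dagger (dagger U * B * U) = dagger U * B * U"
proof -
  have "dim_row U = 2^n" "dim_col U = 2^n" "dim_row B = 2^n" "dim_col B = 2^n"
    using assms(1,2) unfolding unitary_op_def by auto
  then show ?thesis using assms(3) by (simp add: dagger_mult_dim)
qed

lemma unitary_conj_involution:
  assumes "unitary_op n U" "B \<in> carrier_mat (2^n) (2^n)" "B * B = 1\<^sub>m (2^n)"
  shows "(dagger U * B * U) * (dagger U * B * U) = 1\<^sub>m (2^n)"
proof -
  have dims: "dim_row U = 2^n" "dim_col U = 2^n" "dim_row B = 2^n" "dim_col B = 2^n"
    and UU: "dagger U * U = 1\<^sub>m (2^n)" "U * dagger U = 1\<^sub>m (2^n)"
    using assms(1,2) unfolding unitary_op_def by auto
  have "U * (dagger U * X) = X" "B * (B * X) = X" if "dim_row X = 2^n" for X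
    using dims that by (intro mult_inverse_cancel_left[OF UU(2)] mult_inverse_cancel_left[OF assms(3)], auto)+
  then show ?thesis using dims UU(1) by simp
qed

lemma cnj_i_powi_mult_self: "cnj (\<i> powi a) * \<i> powi a = 1"
  by (metis complex_cnj_power_int mult.assoc power_int_mult_distrib i_squared complex_i_mult_minus
      complex_cnj_i power_int_minus_one_mult_self)

lemma involution_if_hermitian_phase:
  assumes "dagger (k \<cdot>\<^sub>m C) = k \<cdot>\<^sub>m C" "cnj k * k = 1" "dagger C * C = 1\<^sub>m N" "C \<in> carrier_mat N N"
  shows "(k \<cdot>\<^sub>m C) * (k \<cdot>\<^sub>m C) = 1\<^sub>m N"
proof -
  have "(k \<cdot>\<^sub>m C) * (k \<cdot>\<^sub>m C) = dagger (k \<cdot>\<^sub>m C) * (k \<cdot>\<^sub>m C)" using assms(1) by simp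
  also have "\<dots> = (cnj k * k) \<cdot>\<^sub>m (dagger C * C)" using assms(4) by (simp add: mult.commute)
  finally show ?thesis using assms(2,3) by simp
qed

lemma dagger_eq_if_hermitian_phase:
  assumes "dagger (k \<cdot>\<^sub>m X) = k \<cdot>\<^sub>m X" "cnj k * k = 1"
  shows "dagger X = k \<cdot>\<^sub>m (k \<cdot>\<^sub>m X)"
proof -
  have "k \<cdot>\<^sub>m (cnj k \<cdot>\<^sub>m dagger X) = k \<cdot>\<^sub>m (k \<cdot>\<^sub>m X)" using assms(1) by simp
  then show ?thesis using assms(2) by (simp add: mult.commute)
qed

section \<open>The commutator of two Pauli observables\<close>

lemma frob_norm_sq_commutator_involutions:
  fixes A B :: "complex mat"
  assumes "A \<in> carrier_mat N N" "B \<in> carrier_mat N N" "dagger A = A" "dagger B = B"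
    "A * A = 1\<^sub>m N" "B * B = 1\<^sub>m N"
  shows "frob_norm_sq (commutator A B) = 2 * of_nat N - 2 * mtrace (A * (B * (A * B)))"
proof -
  have dims[simp]: "dim_row A = N" "dim_col A = N" "dim_row B = N" "dim_col B = N"
    using assms(1,2) by auto
  have cancel: "A * (A * X) = X" "B * (B * X) = X" if "dim_row X = N" for X
    using that by (intro mult_inverse_cancel_left[OF assms(5)] mult_inverse_cancel_left[OF assms(6)], auto)+
  have "dagger (A * B - B * A) = B * A - A * B"
    by (subst dagger_minus[of _ N N]) (auto simp: dagger_mult_dim assms(3,4))
  then have "frob_norm_sq (commutator A B) = mtrace ((B * A - A * B) * (A * B - B * A))"
    unfolding frob_norm_sq_def commutator_def by simp
  also have "\<dots> = mtrace (B * (A * (A * B))) - mtrace (A * (B * (A * B)))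
      - (mtrace (B * (A * (B * A))) - mtrace (A * (B * (B * A))))"
    by (simp add: minus_mult_distrib_dim mult_minus_distrib_dim mtrace_minus_dim)
  also have "mtrace (B * (A * (B * A))) = mtrace (A * (B * (A * B)))"
    using mtrace_comm_dim[of B "A * (B * A)"] by simp
  finally show ?thesis using assms(5,6) by (simp add: cancel mtrace_one)
qed

lemma sum_atLeast1_atMost_shift: "(\<Sum>\<nu>\<in>{1..N}. f \<nu>) = (\<Sum>m<N. f (Suc m) :: 'a::comm_monoid_add)"
  unfolding One_nat_def by (rule sum.atLeast1_atMost_eq)

lemma sign_flip_matchgate_rows_orthogonal:
  assumes "SO_mat (2*n) u" "1 \<le> p" "p \<le> 2*n" "1 \<le> q" "q \<le> 2*n" "p \<noteq> q"
  shows "mode_inner n (sign_flip \<eta> (matchgate_row u p)) (sign_flip \<eta> (matchgate_row u q)) = 0"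
proof -
  have uut: "u * transpose_mat u = 1\<^sub>m (2*n)" and uc: "u \<in> carrier_mat (2*n) (2*n)"
    using assms(1) unfolding SO_mat_def by auto
  have "mode_inner n (sign_flip \<eta> (matchgate_row u p)) (sign_flip \<eta> (matchgate_row u q))
      = (\<Sum>\<nu>\<in>{1..2*n}. matchgate_row u p \<nu> * matchgate_row u q \<nu>)"
    unfolding mode_inner_def sign_flip_def
    by (rule sum.cong[OF refl]) (metis (no_types, lifting) mult.assoc mult.left_commute mult_1 anticomm_sign_sq)
  also have "\<dots> = (\<Sum>m<2*n. u $$ (p - 1, m) * u $$ (q - 1, m))"
    unfolding sum_atLeast1_atMost_shift matchgate_row_def by simp
  also have "\<dots> = (u * transpose_mat u) $$ (p - 1, q - 1)"
    using uc assms by (simp add: scalar_prod_def atLeast0LessThan)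
  also have "\<dots> = 0" using uut assms by simp
  finally show ?thesis .
qed

lemma mult_diagonal_mat:
  fixes R :: "real mat"
  assumes "D \<in> carrier_mat k k" "\<And>m m'. m < k \<Longrightarrow> m' < k \<Longrightarrow> D $$ (m,m') = (if m = m' then \<delta> m else 0)"
    "R \<in> carrier_mat p k"
  shows "R * D = mat p k (\<lambda>(i,m). R $$ (i,m) * \<delta> m)"
proof (rule eq_matI)
  fix i m assume "i < dim_row (mat p k (\<lambda>(i,m). R $$ (i,m) * \<delta> m))"
    "m < dim_col (mat p k (\<lambda>(i,m). R $$ (i,m) * \<delta> m))"
  then have im: "i < p" "m < k" by auto
  then have "(R * D) $$ (i,m) = (\<Sum>m'\<in>{0..<k}. R $$ (i,m') * D $$ (m',m))"
    using assms by (auto simp: scalar_prod_def)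
  also have "\<dots> = (\<Sum>m'\<in>{0..<k}. if m' = m then R $$ (i,m) * \<delta> m else 0)"
    by (rule sum.cong) (use assms im in auto)
  finally show "(R * D) $$ (i,m) = mat p k (\<lambda>(i,m). R $$ (i,m) * \<delta> m) $$ (i,m)"
    using im by simp
qed (use assms in auto)

lemma gram_mat_sign_flip_matchgate_rows:
  "gram_mat n (map (sign_flip \<eta>) (map (matchgate_row u) \<alpha>)) (map (matchgate_row u) \<alpha>)
    = (-1) ^ length \<eta> \<cdot>\<^sub>m (rows_sub n u \<alpha> * (1\<^sub>m (2 * n) - 2 \<cdot>\<^sub>m proj_modes n \<eta>)
        * transpose_mat (rows_sub n u \<alpha>))"
  (is "?G = _ \<cdot>\<^sub>m (?R * ?D * transpose_mat ?R)")
proof (rule eq_matI)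
  have Rc: "?R \<in> carrier_mat (length \<alpha>) (2*n)" unfolding rows_sub_def by simp
  have RD: "?R * ?D = mat (length \<alpha>) (2*n) (\<lambda>(i,m). ?R $$ (i,m) * (if Suc m \<in> set \<eta> then -1 else 1))"
    by (rule mult_diagonal_mat[OF _ _ Rc]) (auto simp: proj_modes_def)
  fix i j assume "i < dim_row ((-1) ^ length \<eta> \<cdot>\<^sub>m (?R * ?D * transpose_mat ?R))"
    "j < dim_col ((-1) ^ length \<eta> \<cdot>\<^sub>m (?R * ?D * transpose_mat ?R))"
  then have ij: "i < length \<alpha>" "j < length \<alpha>" using Rc by auto
  have "?G $$ (i,j) = (\<Sum>\<nu>\<in>{1..2*n}. anticomm_sign \<eta> \<nu> * matchgate_row u (\<alpha>!i) \<nu> * matchgate_row u (\<alpha>!j) \<nu>)"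
    using ij unfolding gram_mat_def mode_inner_def sign_flip_def by simp
  also have "\<dots> = (\<Sum>m<2*n. anticomm_sign \<eta> (Suc m) * u $$ (\<alpha>!i - 1, m) * u $$ (\<alpha>!j - 1, m))"
    unfolding sum_atLeast1_atMost_shift matchgate_row_def by simp
  also have "\<dots> = ((-1) ^ length \<eta> \<cdot>\<^sub>m (?R * ?D * transpose_mat ?R)) $$ (i,j)"
    using ij Rc unfolding RD
    by (auto simp: scalar_prod_def atLeast0LessThan sum_distrib_left rows_sub_def anticomm_sign_def
        intro!: sum.cong)
  finally show "?G $$ (i,j) = ((-1) ^ length \<eta> \<cdot>\<^sub>m (?R * ?D * transpose_mat ?R)) $$ (i,j)" .
qed (auto simp: gram_mat_def rows_sub_def)

lemma mtrace_conj_observables_eq_det: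
  assumes "matchgate_with n U u" "majorana_config n \<eta>" "majorana_config n \<alpha>"
    and A: "A = k \<cdot>\<^sub>m config_op n \<eta>" "A * A = 1\<^sub>m (2^n)"
    and B: "B = dagger U * (l \<cdot>\<^sub>m config_op n \<alpha>) * U" "dagger B = B" "cnj l * l = 1"
  shows "mtrace (A * (B * (A * B))) = 2^n * complex_of_real ((-1) ^ (length \<alpha> * length \<eta>) *
    det (rows_sub n u \<alpha> * (1\<^sub>m (2 * n) - 2 \<cdot>\<^sub>m proj_modes n \<eta>) * transpose_mat (rows_sub n u \<alpha>)))"
proof -
  have \<eta>: "distinct \<eta>" "\<forall>m\<in>set \<eta>. 1 \<le> m \<and> m \<le> 2*n"
    and \<alpha>: "sorted_wrt (<) \<alpha>" "\<forall>m\<in>set \<alpha>. 1 \<le> m \<and> m \<le> 2*n"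
    using assms(2,3) unfolding majorana_config_def strict_sorted_iff by auto
  have SO: "SO_mat (2*n) u" using assms(1) unfolding matchgate_with_def by simp
  define ds where "ds = map (matchgate_row u) \<alpha>"
  define X where "X = majorana_prod n ds"
  have "dim_row U = 2^n" "dim_col U = 2^n"
    using assms(1) unfolding matchgate_with_def unitary_op_def by auto
  then have "B = l \<cdot>\<^sub>m (dagger U * config_op n \<alpha> * U)" unfolding B(1) by simp
  then have B_X: "B = l \<cdot>\<^sub>m X"
    unfolding X_def ds_def matchgate_conj_config_op[OF assms(1) \<alpha>(2)] .
  have "dagger X = l \<cdot>\<^sub>m B"
    unfolding B_X by (rule dagger_eq_if_hermitian_phase[OF _ B(3)]) (use B(2) in \<open>simp add: B_X\<close>)
  then have dagger_X: "l \<cdot>\<^sub>m B = majorana_prod n (rev ds)"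
    unfolding X_def dagger_majorana_prod by simp
  have conj_X: "A * X * A = majorana_prod n (map (sign_flip \<eta>) ds)"
    unfolding X_def A(1) by (rule config_conj_majorana_prod[OF \<eta>]) (use A in simp)
  have "A * (B * (A * B)) = (A * X * A) * (l \<cdot>\<^sub>m B)"
    unfolding B_X A(1) X_def by (simp add: ac_simps)
  then have "mtrace (A * (B * (A * B))) = mtrace (majorana_prod n (map (sign_flip \<eta>) ds) * majorana_prod n (rev ds))"
    unfolding conj_X dagger_X by (rule arg_cong)
  also have "\<dots> = 2^n * complex_of_real (det (gram_mat n (map (sign_flip \<eta>) ds) ds))"
  proof (rule mtrace_majorana_prod_eq_det_gram)
    show "sorted_wrt (\<lambda>x y. mode_inner n x y = 0) (map (sign_flip \<eta>) ds)"
      unfolding ds_def map_map sorted_wrt_map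
      by (rule sorted_wrt_mono_rel[OF _ \<alpha>(1)])
        (use sign_flip_matchgate_rows_orthogonal[OF SO] \<alpha>(2) in auto)
  qed simp
  finally show ?thesis
    unfolding ds_def gram_mat_sign_flip_matchgate_rows
    by (simp add: rows_sub_def power_mult mult.commute[of "length \<alpha>"])
qed

theorem theorem1:
  fixes n :: nat and U :: "complex mat" and u :: "real mat"
    and \<eta> \<alpha> :: "nat list" and a b :: int
  assumes "n \<ge> 1"
    and "matchgate_with n U u"
    and "majorana_config n \<eta>" and "majorana_config n \<alpha>"
    and "dagger (\<i> powi a \<cdot>\<^sub>m config_op n \<eta>) = \<i> powi a \<cdot>\<^sub>m config_op n \<eta>"
    and "dagger (\<i> powi b \<cdot>\<^sub>m config_op n \<alpha>) = \<i> powi b \<cdot>\<^sub>m config_op n \<alpha>"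
  shows "frob_norm_sq (commutator (\<i> powi a \<cdot>\<^sub>m config_op n \<eta>)
            (dagger U * (\<i> powi b \<cdot>\<^sub>m config_op n \<alpha>) * U)) / 2 ^ (n + 2)
       = complex_of_real ((1 + (-1) ^ (length \<alpha> * length \<eta> + 1) *
            det (rows_sub n u \<alpha> * (1\<^sub>m (2 * n) - 2 \<cdot>\<^sub>m proj_modes n \<eta>)
                 * transpose_mat (rows_sub n u \<alpha>))) / 2)"
proof -
  define A where "A = \<i> powi a \<cdot>\<^sub>m config_op n \<eta>"
  define B where "B = dagger U * (\<i> powi b \<cdot>\<^sub>m config_op n \<alpha>) * U"
  have U: "unitary_op n U" using assms(2) unfolding matchgate_with_def by simp
  have range: "\<forall>m\<in>set \<eta>. 1 \<le> m \<and> m \<le> 2*n" "\<forall>m\<in>set \<alpha>. 1 \<le> m \<and> m \<le> 2*n"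
    using assms(3,4) unfolding majorana_config_def by auto
  have AA: "A * A = 1\<^sub>m (2^n)" unfolding A_def
    by (rule involution_if_hermitian_phase[OF assms(5) cnj_i_powi_mult_self
          dagger_config_op_mult_self[OF range(1)] config_op_carrier])
  have "(\<i> powi b \<cdot>\<^sub>m config_op n \<alpha>) * (\<i> powi b \<cdot>\<^sub>m config_op n \<alpha>) = 1\<^sub>m (2^n)"
    by (rule involution_if_hermitian_phase[OF assms(6) cnj_i_powi_mult_self
          dagger_config_op_mult_self[OF range(2)] config_op_carrier])
  then have BB: "B * B = 1\<^sub>m (2^n)" unfolding B_def by (rule unitary_conj_involution[OF U, rotated]) simp
  have BH: "dagger B = B" unfolding B_def by (rule unitary_conj_hermitian[OF U _ assms(6)]) simp
  have AH: "dagger A = A" using assms(5) unfolding A_def .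
  have Ac: "A \<in> carrier_mat (2^n) (2^n)" unfolding A_def by simp
  have "U \<in> carrier_mat (2^n) (2^n)" using U unfolding unitary_op_def by blast
  then have Bc: "B \<in> carrier_mat (2^n) (2^n)"
    unfolding B_def by (meson mult_carrier_mat dagger_carrier smult_carrier_mat config_op_carrier)
  have "frob_norm_sq (commutator A B) = 2 * of_nat (2^n) - 2 * mtrace (A * (B * (A * B)))"
    by (rule frob_norm_sq_commutator_involutions[OF Ac Bc AH BH AA BB])
  also have "mtrace (A * (B * (A * B))) = 2^n * complex_of_real ((-1) ^ (length \<alpha> * length \<eta>) *
      det (rows_sub n u \<alpha> * (1\<^sub>m (2 * n) - 2 \<cdot>\<^sub>m proj_modes n \<eta>) * transpose_mat (rows_sub n u \<alpha>)))"
    by (rule mtrace_conj_observables_eq_det[OF assms(2-4) A_def AA B_def BH cnj_i_powi_mult_self])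
  finally have frob: "frob_norm_sq (commutator A B) = 2 * of_nat (2^n) - 2 * (2^n *
      complex_of_real ((-1) ^ (length \<alpha> * length \<eta>) * det (rows_sub n u \<alpha> *
        (1\<^sub>m (2 * n) - 2 \<cdot>\<^sub>m proj_modes n \<eta>) * transpose_mat (rows_sub n u \<alpha>))))" .
  have normalize: "(2 * of_nat (2^n) - 2 * (2^n * z)) / 2 ^ (n + 2) = (1 - z) / 2" for z :: complex
    by (simp add: power_add field_simps)
  show ?thesis unfolding A_def[symmetric] B_def[symmetric] frob normalize by simp
qed

end
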